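(* Under the hypotheses of the Simultaneous Polynomial Ergodicity theorem (Assumption (A), simultaneous polynomial drift $P_\gamma V\le V-cV^\alpha+b1_C$ for all $\gamma$ with $\alpha>2/3$ and $\sup_{x\in C}V(x)<\infty$), there exists $M<\infty$ such that for the AirMCMC chain started at $(X_0,\gamma_0)$, for all $n>0$ and all $m\ge M$, $$\mathbb P_{(X_0,\gamma_0)}\big(V^{2\alpha-1}(X_n)>m\big)\le M\,V(X_0)\,\frac{\log(1+m)}{m}.$$
   Context: Assumption (A): each $P_\gamma$ is $\pi$-invariant, $\pi$-irreducible, aperiodic, and $P_\gamma(x,\cdot)\ge\delta\nu(\cdot)$ for $x\in C$, all $\gamma$, with $\pi(C)>0$. $V:\mathcal X\to[1,\infty)$, $c>0$, $b<\infty$. AirMCMC chain: $(X_n,\gamma_n)$ with $\gamma_n$ produced by an arbitrary (possibly randomised) adaptation rule from the past; with lags $n_k$, $N_0=0$, $N_j=\sum_{k\le j}n_k$, for $N_j\le n<N_{j+1}$, conditionally on the past, $X_{n+1}\sim P_{\gamma_{N_j}}(X_n,\cdot)$. $\mathbb P_{(X_0,\gamma_0)}$ is its law started at $(X_0,\gamma_0)$. *)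

theory Defs
  imports "HOL-Probability.Probability"
begin

text \<open>A Markov kernel on S is a map K with K \<in> S \<rightarrow>M prob_algebra S.
  n-step kernel:\<close>
primrec kernel_pow :: "'x measure \<Rightarrow> ('x \<Rightarrow> 'x measure) \<Rightarrow> nat \<Rightarrow> 'x \<Rightarrow> 'x measure" where
  "kernel_pow S K 0 x = return S x"
| "kernel_pow S K (Suc n) x = bind (kernel_pow S K n x) K"

definition pi_invariant :: "'x measure \<Rightarrow> 'x measure \<Rightarrow> ('x \<Rightarrow> 'x measure) \<Rightarrow> bool" where
  "pi_invariant S \<pi> K \<longleftrightarrow>
     (\<forall>A\<in>sets S. measure \<pi> A = (\<integral>x. measure (K x) A \<partial>\<pi>))"

definition pi_irreducible :: "'x measure \<Rightarrow> 'x measure \<Rightarrow> ('x \<Rightarrow> 'x measure) \<Rightarrow> bool" where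
  "pi_irreducible S \<pi> K \<longleftrightarrow>
     (\<forall>x\<in>space S. \<forall>A\<in>sets S. measure \<pi> A > 0 \<longrightarrow>
        (\<exists>n\<ge>1. measure (kernel_pow S K n x) A > 0))"

definition aperiodic_kernel :: "'x measure \<Rightarrow> 'x measure \<Rightarrow> ('x \<Rightarrow> 'x measure) \<Rightarrow> bool" where
  "aperiodic_kernel S \<pi> K \<longleftrightarrow>
     \<not> (\<exists>d::nat. \<exists>D :: nat \<Rightarrow> 'x set. d \<ge> 2 \<and>
          (\<forall>i<d. D i \<in> sets S \<and> measure \<pi> (D i) > 0) \<and>
          (\<forall>i<d. \<forall>j<d. i \<noteq> j \<longrightarrow> D i \<inter> D j = {}) \<and>
          (\<forall>i<d. \<forall>x\<in>D i. measure (K x) (D (Suc i mod d)) = 1))"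

definition lag_time :: "(nat \<Rightarrow> nat) \<Rightarrow> nat \<Rightarrow> nat" where
  "lag_time lags j = (\<Sum>k\<in>{1..j}. lags k)"

text \<open>AirMCMC chain (X_n, gamma_n) on a probability space Mw with filtration F,
  started at (x0, g0): adapted to F, with arbitrary (possibly randomised) adaptation,
  and for N_j \<le> n < N_{j+1}, conditionally on F_n, X_{n+1} ~ P_{gamma_{N_j}}(X_n, .)
  (written out via the defining property of conditional probability).\<close>
definition airmcmc_chain ::
  "'x measure \<Rightarrow> 'g measure \<Rightarrow> ('g \<Rightarrow> 'x \<Rightarrow> 'x measure) \<Rightarrow> (nat \<Rightarrow> nat) \<Rightarrow>
   'w measure \<Rightarrow> (nat \<Rightarrow> 'w measure) \<Rightarrow> (nat \<Rightarrow> 'w \<Rightarrow> 'x) \<Rightarrow> (nat \<Rightarrow> 'w \<Rightarrow> 'g) \<Rightarrow>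
   'x \<Rightarrow> 'g \<Rightarrow> bool" where
  "airmcmc_chain S G P lags Mw F X \<gamma> x0 g0 \<longleftrightarrow>
     prob_space Mw \<and>
     (\<forall>n. subalgebra Mw (F n)) \<and>
     (\<forall>n. sets (F n) \<subseteq> sets (F (Suc n))) \<and>
     (\<forall>n. X n \<in> F n \<rightarrow>\<^sub>M S) \<and>
     (\<forall>n. \<gamma> n \<in> F n \<rightarrow>\<^sub>M G) \<and>
     (\<forall>\<omega>\<in>space Mw. X 0 \<omega> = x0 \<and> \<gamma> 0 \<omega> = g0) \<and>
     (\<forall>j n. lag_time lags j \<le> n \<and> n < lag_time lags (Suc j) \<longrightarrow>
        (\<forall>A\<in>sets S. \<forall>B\<in>sets (F n).
           measure Mw (B \<inter> {\<omega>\<in>space Mw. X (Suc n) \<omega> \<in> A}) =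
           (\<integral>\<omega>. indicator B \<omega> * measure (P (\<gamma> (lag_time lags j) \<omega>) (X n \<omega>)) A \<partial>Mw)))"

end

theory Submission
  imports Defs
begin

text \<open>
  For \<open>\<alpha> < 1\<close> let \<open>\<beta> = 1 - \<alpha>\<close> and \<open>h s z = (z powr \<beta> + s) powr (1/\<beta>)\<close>. Since \<open>h s\<close> is
  concave, Jensen's inequality and the drift give \<open>P h (s + \<beta> c) V \<le> h s V\<close> outside \<open>C\<close>.
  Hence along an excursion away from \<open>C\<close> of length \<open>j\<close> the expectation of \<open>h (\<beta> c j) (V X)\<close>
  stays bounded: by \<open>V x0\<close> before the first visit to \<open>C\<close>, by a constant after a visit.
  As \<open>h s z \<ge> t powr (1 - 2\<beta>) * s\<^sup>2\<close> for \<open>z \<ge> t\<close>, splitting \<open>{V (X n) > t}\<close> according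
  to the last visit \<open>k < n\<close> to \<open>C\<close> and applying Markov's inequality gives
  \<open>P(V (X n) > t) \<le> V x0 / t + const * t powr (1 - 2\<alpha>) * (\<Sum>k<n. 1 / (n - k)\<^sup>2)\<close>,
  and \<open>t = m powr (1 / (2\<alpha> - 1))\<close> yields a bound of order \<open>V x0 / m\<close>.
  For \<open>\<alpha> = 1\<close> the drift is geometric and \<open>E V (X n)\<close> stays bounded; for \<open>\<alpha> > 1\<close> the drift
  forces \<open>V\<close> to be bounded on the whole state space.
\<close>

lemma below_tangent_if_deriv_antimono:
  fixes f f' :: "real \<Rightarrow> real"
  assumes deriv: "\<And>x. x > 0 \<Longrightarrow> (f has_real_derivative f' x) (at x)"
    and antimono: "\<And>x y. 0 < x \<Longrightarrow> x \<le> y \<Longrightarrow> f' y \<le> f' x"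
    and y: "y > 0" and z: "z > 0"
  shows "f y \<le> f z + f' z * (y - z)"
proof (cases y z rule: linorder_cases)
  case less
  obtain w where w: "y < w" "w < z" "f z - f y = (z - y) * f' w"
    using MVT2[OF less, of f f'] deriv y by force
  have "(z - y) * f' z \<le> (z - y) * f' w"
    using antimono[of w z] w y less by (intro mult_left_mono) auto
  then show ?thesis using w by (simp add: algebra_simps)
next
  case greater
  obtain w where w: "z < w" "w < y" "f y - f z = (y - z) * f' w"
    using MVT2[OF greater, of f f'] deriv z by force
  have "(y - z) * f' w \<le> (y - z) * f' z"
    using antimono[of z w] w z greater by (intro mult_left_mono) auto
  then show ?thesis using w by (simp add: algebra_simps)
qed simp

lemma powr_below_tangent:
  fixes \<beta> y z :: real
  assumes "0 < \<beta>" "\<beta> \<le> 1" "y > 0" "z > 0"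
  shows "y powr \<beta> \<le> z powr \<beta> + \<beta> * z powr (\<beta> - 1) * (y - z)"
proof -
  have "y powr \<beta> \<le> z powr \<beta> + (\<lambda>x. \<beta> * x powr (\<beta> - 1)) z * (y - z)"
  proof (rule below_tangent_if_deriv_antimono[where f="\<lambda>x. x powr \<beta>"])
    show "((\<lambda>x. x powr \<beta>) has_real_derivative \<beta> * x powr (\<beta> - 1)) (at x)" if "x > 0" for x
      using has_real_derivative_powr[OF that] by simp
    show "\<beta> * y' powr (\<beta> - 1) \<le> \<beta> * x powr (\<beta> - 1)" if "0 < x" "x \<le> y'" for x y'
      using powr_mono2'[of "\<beta> - 1" x y'] that assms by (intro mult_left_mono) auto
  qed (use assms in auto)
  then show ?thesis by simp
qed

definition root_shift :: "real \<Rightarrow> real \<Rightarrow> real \<Rightarrow> real" where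
  "root_shift \<beta> s z = (z powr \<beta> + s) powr (1/\<beta>)"

definition root_shift_deriv :: "real \<Rightarrow> real \<Rightarrow> real \<Rightarrow> real" where
  "root_shift_deriv \<beta> s z = (1 + s * z powr (-\<beta>)) powr (1/\<beta> - 1)"

lemma root_shift_nonneg [simp]: "root_shift \<beta> s z \<ge> 0"
  unfolding root_shift_def by simp

lemma root_shift_zero: "0 < \<beta> \<Longrightarrow> z > 0 \<Longrightarrow> root_shift \<beta> 0 z = z"
  unfolding root_shift_def by (simp add: powr_powr)

lemma has_real_derivative_root_shift:
  assumes "0 < \<beta>" "\<beta> < 1" "s \<ge> 0" "z > 0"
  shows "(root_shift \<beta> s has_real_derivative root_shift_deriv \<beta> s z) (at z)"
proof -
  have pos: "z powr \<beta> + s > 0" using assms by (simp add: add_pos_nonneg)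
  have "((\<lambda>x. (x powr \<beta> + s) powr (1/\<beta>)) has_real_derivative
      (1/\<beta>) * (z powr \<beta> + s) powr (1/\<beta> - 1) * (\<beta> * z powr (\<beta> - 1))) (at z)"
    using assms pos by (auto intro!: derivative_eq_intros)
  moreover have "(1/\<beta>) * (z powr \<beta> + s) powr (1/\<beta> - 1) * (\<beta> * z powr (\<beta> - 1))
      = root_shift_deriv \<beta> s z"
  proof -
    have "z powr (\<beta> - 1) = (z powr (-\<beta>)) powr (1/\<beta> - 1)"
    proof -
      have "-\<beta> * (1/\<beta> - 1) = \<beta> - 1" using assms by (simp add: field_simps)
      then show ?thesis by (simp add: powr_powr)
    qed
    moreover have "(z powr \<beta> + s) * z powr (-\<beta>) = 1 + s * z powr (-\<beta>)"
      using assms by (simp add: distrib_right powr_add[symmetric])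
    ultimately show ?thesis
      unfolding root_shift_deriv_def using assms pos by (simp add: powr_mult[symmetric])
  qed
  ultimately show ?thesis unfolding root_shift_def[abs_def] by simp
qed

lemma root_shift_deriv_antimono:
  assumes "0 < \<beta>" "\<beta> < 1" "s \<ge> 0" "0 < x" "x \<le> y"
  shows "root_shift_deriv \<beta> s y \<le> root_shift_deriv \<beta> s x"
proof -
  have "y powr (-\<beta>) \<le> x powr (-\<beta>)" using powr_mono2'[of "-\<beta>" x y] assms by auto
  then have "1 + s * y powr (-\<beta>) \<le> 1 + s * x powr (-\<beta>)" using assms by (simp add: mult_left_mono)
  then show ?thesis unfolding root_shift_deriv_def using assms by (intro powr_mono2) auto
qed

lemma root_shift_below_tangent:
  assumes "0 < \<beta>" "\<beta> < 1" "s \<ge> 0" "y > 0" "z > 0"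
  shows "root_shift \<beta> s y \<le> root_shift \<beta> s z + root_shift_deriv \<beta> s z * (y - z)"
  by (rule below_tangent_if_deriv_antimono)
     (use assms has_real_derivative_root_shift root_shift_deriv_antimono in auto)

lemma root_shift_mono:
  assumes "0 < \<beta>" "0 \<le> s" "s \<le> s'" "0 < z" "z \<le> z'"
  shows "root_shift \<beta> s z \<le> root_shift \<beta> s' z'"
  unfolding root_shift_def using assms by (intro powr_mono2 add_mono powr_mono2) auto

lemma root_shift_drift:
  assumes \<beta>: "0 < \<beta>" "\<beta> < 1" and s: "s \<ge> 0" and c: "c > 0"
    and z: "z > 0" and drift_pos: "z - c * z powr (1 - \<beta>) > 0"
  shows "root_shift \<beta> (s + \<beta> * c) (z - c * z powr (1 - \<beta>)) \<le> root_shift \<beta> s z"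
proof -
  let ?w = "z - c * z powr (1 - \<beta>)"
  have "?w powr \<beta> \<le> z powr \<beta> + \<beta> * z powr (\<beta> - 1) * (?w - z)"
    using powr_below_tangent[of \<beta> ?w z] \<beta> z drift_pos by auto
  also have "\<beta> * z powr (\<beta> - 1) * (?w - z) = - \<beta> * c * (z powr (\<beta> - 1) * z powr (1 - \<beta>))"
    by (simp add: algebra_simps)
  also have "z powr (\<beta> - 1) * z powr (1 - \<beta>) = 1" using z by (simp add: powr_add[symmetric])
  finally have "?w powr \<beta> + (s + \<beta> * c) \<le> z powr \<beta> + s" by simp
  moreover have "0 \<le> ?w powr \<beta> + (s + \<beta> * c)" using \<beta> c s by simp
  ultimately show ?thesis unfolding root_shift_def using \<beta> by (intro powr_mono2) auto
qed

lemma root_shift_ge: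
  assumes "0 < \<beta>" "s \<ge> 0" "0 < t" "t \<le> z"
  shows "t \<le> root_shift \<beta> s z"
  using root_shift_mono[of \<beta> 0 s t z] root_shift_zero[of \<beta> t] assms by simp

lemma root_shift_ge_square:
  assumes \<beta>: "0 < \<beta>" "\<beta> \<le> 1/2" and s: "s \<ge> 0" and t: "0 < t" "t \<le> z"
  shows "t powr (1 - 2*\<beta>) * s\<^sup>2 \<le> root_shift \<beta> s z"
proof -
  have T: "t powr \<beta> > 0" using t by simp
  have "root_shift \<beta> s t = (t powr \<beta> + s) powr (1/\<beta> - 2) * (t powr \<beta> + s) powr 2"
    unfolding root_shift_def by (simp flip: powr_add)
  also have "(t powr \<beta> + s) powr 2 = (t powr \<beta> + s)\<^sup>2"
    using T s by (simp add: powr_numeral add_pos_nonneg)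
  finally have split: "root_shift \<beta> s t = (t powr \<beta> + s) powr (1/\<beta> - 2) * (t powr \<beta> + s)\<^sup>2" .
  have "t powr (1 - 2*\<beta>) = (t powr \<beta>) powr (1/\<beta> - 2)"
  proof -
    have "\<beta> * (1/\<beta> - 2) = 1 - 2*\<beta>" using \<beta> by (simp add: field_simps)
    then show ?thesis by (simp add: powr_powr)
  qed
  also have "\<dots> \<le> (t powr \<beta> + s) powr (1/\<beta> - 2)"
    using T s \<beta> by (intro powr_mono2) (auto simp: field_simps)
  finally have "t powr (1 - 2*\<beta>) * s\<^sup>2 \<le> (t powr \<beta> + s) powr (1/\<beta> - 2) * (t powr \<beta> + s)\<^sup>2"
    using T s by (intro mult_mono power_mono) auto
  also have "\<dots> \<le> root_shift \<beta> s z"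
    unfolding split[symmetric] using root_shift_mono[of \<beta> s s t z] \<beta> s t by simp
  finally show ?thesis .
qed

lemma nn_integral_root_shift_le:
  fixes M :: "'a measure" and V :: "'a \<Rightarrow> real"
  assumes M: "prob_space M" and V_meas: "V \<in> borel_measurable M"
    and V_pos: "\<forall>y\<in>space M. V y > 0"
    and mean: "(\<integral>\<^sup>+ y. ennreal (V y) \<partial>M) \<le> ennreal z" and z: "z > 0"
    and \<beta>: "0 < \<beta>" "\<beta> < 1" and s: "s \<ge> 0"
  shows "(\<integral>\<^sup>+ y. ennreal (root_shift \<beta> s (V y)) \<partial>M) \<le> ennreal (root_shift \<beta> s z)"
proof -
  interpret prob_space M by fact
  have V_nonneg: "AE y in M. 0 \<le> V y" using V_pos by (intro AE_I2) (auto intro: less_imp_le)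
  have V_int: "integrable M V"
    by (rule integrableI_nonneg[OF V_meas V_nonneg]) (use mean in \<open>simp add: order_le_less_trans\<close>)
  have "ennreal (integral\<^sup>L M V) \<le> ennreal z"
    using mean nn_integral_eq_integral[OF V_int V_nonneg] by simp
  then have mean': "integral\<^sup>L M V \<le> z" using z by (simp add: ennreal_le_iff)
  define A where "A y = root_shift \<beta> s z + root_shift_deriv \<beta> s z * (V y - z)" for y
  have below_A: "root_shift \<beta> s (V y) \<le> A y" if "y \<in> space M" for y
    unfolding A_def using root_shift_below_tangent[of \<beta> s "V y" z] V_pos that z \<beta> s by force
  have A_int: "integrable M A" unfolding A_def using V_int by auto
  have A_nonneg: "AE y in M. 0 \<le> A y"
    using below_A by (intro AE_I2) (meson order_trans root_shift_nonneg)
  have "(\<integral>\<^sup>+ y. ennreal (root_shift \<beta> s (V y)) \<partial>M) \<le> (\<integral>\<^sup>+ y. ennreal (A y) \<partial>M)"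
    using below_A by (intro nn_integral_mono) (auto simp: ennreal_leI)
  also have "\<dots> = ennreal (integral\<^sup>L M A)"
    using nn_integral_eq_integral[OF A_int A_nonneg] by simp
  also have "integral\<^sup>L M A = root_shift \<beta> s z + root_shift_deriv \<beta> s z * (integral\<^sup>L M V - z)"
    unfolding A_def using V_int prob_space by simp
  also have "\<dots> \<le> root_shift \<beta> s z"
    using mean' by (simp add: mult_nonneg_nonpos root_shift_deriv_def)
  finally show ?thesis by (simp add: ennreal_leI)
qed

lemma sum_inverse_squares_le_2: "(\<Sum>k<n. 1 / (real (n - k))\<^sup>2) \<le> 2"
proof -
  have "(\<Sum>k<n. 1 / (real (n - k))\<^sup>2) = (\<Sum>i<n. 1 / real ((i + 1)\<^sup>2))"
    by (rule trans[OF sum.nat_diff_reindex[symmetric] sum.cong]) (auto simp: Suc_diff_Suc)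
  also have "\<dots> \<le> pi\<^sup>2 / 6"
    using sum_le_suminf[OF sums_summable[OF inverse_squares_sums], of "{..<n}"]
      inverse_squares_sums by (simp add: sums_iff)
  also have "\<dots> \<le> 2"
  proof -
    have "pi * pi \<le> 3.2 * 3.2" using pi_approx pi_gt_zero by (intro mult_mono) auto
    then show ?thesis by (simp add: power2_eq_square)
  qed
  finally show ?thesis .
qed

lemma (in finite_measure) measure_le_nn_integral_divide:
  assumes E: "E \<in> sets M" and T: "T \<in> sets M" and L: "L > 0" and R: "R \<ge> 0"
    and large: "\<forall>\<omega>\<in>E \<inter> T. L \<le> h \<omega>"
    and integral: "(\<integral>\<^sup>+\<omega>. indicator E \<omega> * ennreal (h \<omega>) \<partial>M) \<le> ennreal R"
  shows "measure M (E \<inter> T) \<le> R / L"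
proof -
  have "ennreal (L * measure M (E \<inter> T)) = (\<integral>\<^sup>+\<omega>. ennreal L * indicator (E \<inter> T) \<omega> \<partial>M)"
    using L E T by (simp add: emeasure_eq_measure ennreal_mult nn_integral_cmult_indicator)
  also have "\<dots> \<le> (\<integral>\<^sup>+\<omega>. indicator E \<omega> * ennreal (h \<omega>) \<partial>M)"
    using large by (intro nn_integral_mono) (auto simp: indicator_def ennreal_leI)
  also have "\<dots> \<le> ennreal R" by (rule integral)
  finally have "L * measure M (E \<inter> T) \<le> R" using R by (simp add: ennreal_le_iff)
  then show ?thesis using L by (simp add: field_simps)
qed

lemma le_ln_bound:
  fixes q a M v m :: real
  assumes "q \<le> a * v / m" "0 \<le> a" "a \<le> M" "v \<ge> 0" "m \<ge> 2"
  shows "q \<le> M * v * ln (1 + m) / m"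
proof -
  have "exp 1 \<le> 1 + m" using exp_le assms(5) by linarith
  then have ln: "1 \<le> ln (1 + m)" using assms(5) by (subst ln_ge_iff) auto
  have "q \<le> a * v / m" by fact
  also have "\<dots> \<le> M * v * ln (1 + m) / m"
  proof (rule divide_right_mono)
    have "a * v \<le> M * v * 1" using assms by (simp add: mult_right_mono)
    also have "\<dots> \<le> M * v * ln (1 + m)"
      using ln assms by (intro mult_left_mono) auto
    finally show "a * v \<le> M * v * ln (1 + m)" .
  qed (use assms in auto)
  finally show ?thesis .
qed

lemma lag_time_Suc: "lag_time lags (Suc j) = lag_time lags j + lags (Suc j)"
  unfolding lag_time_def by simp

lemma lag_block_exists:
  assumes "\<forall>k\<ge>1. lags k \<ge> (1::nat)"
  shows "\<exists>j. lag_time lags j \<le> n \<and> n < lag_time lags (Suc j)"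
proof (induction n)
  case 0
  have "lag_time lags 1 \<ge> 1" using assms by (simp add: lag_time_def)
  then show ?case by (intro exI[of _ 0]) (simp add: lag_time_def)
next
  case (Suc n)
  then obtain j where j: "lag_time lags j \<le> n" "n < lag_time lags (Suc j)" by blast
  show ?case
  proof (cases "Suc n < lag_time lags (Suc j)")
    case True then show ?thesis using j by (intro exI[of _ j]) simp
  next
    case False
    then have "Suc n = lag_time lags (Suc j)" using j by simp
    moreover have "lags (Suc (Suc j)) \<ge> 1" using assms by simp
    ultimately show ?thesis by (intro exI[of _ "Suc j"]) (simp add: lag_time_Suc[of lags "Suc j"])
  qed
qed

locale airmcmc_process =
  fixes S :: "'x measure" and G :: "'g measure" and P :: "'g \<Rightarrow> 'x \<Rightarrow> 'x measure"
    and lags :: "nat \<Rightarrow> nat" and Mw :: "'w measure" and F :: "nat \<Rightarrow> 'w measure"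
    and X :: "nat \<Rightarrow> 'w \<Rightarrow> 'x" and \<gamma> :: "nat \<Rightarrow> 'w \<Rightarrow> 'g" and x0 :: 'x and g0 :: 'g
  assumes kernel: "(\<lambda>(g, x). P g x) \<in> G \<Otimes>\<^sub>M S \<rightarrow>\<^sub>M prob_algebra S"
    and chain: "airmcmc_chain S G P lags Mw F X \<gamma> x0 g0"
    and lags_pos: "\<forall>k\<ge>1. lags k \<ge> 1"
begin

sublocale prob_space Mw using chain unfolding airmcmc_chain_def by blast

lemma subalgebra_F: "subalgebra Mw (F n)"
  using chain unfolding airmcmc_chain_def by blast

lemma space_F: "space (F n) = space Mw"
  using subalgebra_F unfolding subalgebra_def by simp

lemma sets_F_subset: "B \<in> sets (F n) \<Longrightarrow> B \<in> sets Mw"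
  using subalgebra_F[of n] unfolding subalgebra_def by blast

lemma X_measurable_F: "i \<le> j \<Longrightarrow> X i \<in> F j \<rightarrow>\<^sub>M S"
proof -
  assume "i \<le> j"
  then have "sets (F i) \<subseteq> sets (F j)"
    using chain lift_Suc_mono_le[of "\<lambda>n. sets (F n)" i j] unfolding airmcmc_chain_def by blast
  then have "subalgebra (F j) (F i)" using space_F unfolding subalgebra_def by metis
  moreover have "X i \<in> F i \<rightarrow>\<^sub>M S" using chain unfolding airmcmc_chain_def by blast
  ultimately show ?thesis using measurable_from_subalg by blast
qed

lemma X_measurable[measurable]: "X n \<in> Mw \<rightarrow>\<^sub>M S"
  using measurable_from_subalg[OF subalgebra_F X_measurable_F[OF order_refl]] .

lemma \<gamma>_measurable[measurable]: "\<gamma> n \<in> Mw \<rightarrow>\<^sub>M G"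
  using chain measurable_from_subalg[OF subalgebra_F] unfolding airmcmc_chain_def by blast

lemma X_in_space: "\<omega> \<in> space Mw \<Longrightarrow> X n \<omega> \<in> space S"
  using measurable_space[OF X_measurable] .

lemma \<gamma>_in_space: "\<omega> \<in> space Mw \<Longrightarrow> \<gamma> n \<omega> \<in> space G"
  using measurable_space[OF \<gamma>_measurable] .

lemma X_0: "\<omega> \<in> space Mw \<Longrightarrow> X 0 \<omega> = x0"
  using chain unfolding airmcmc_chain_def by blast

text \<open>The defining property of the chain, moved from sets to functions: conditionally on
  \<open>F n\<close>, the state \<open>X (Suc n)\<close> is drawn from the kernel frozen at the start of the current block.\<close>

lemma nn_integral_indicator_next:
  assumes f[measurable]: "f \<in> borel_measurable S" and B: "B \<in> sets (F n)"
  shows "\<exists>N. (\<integral>\<^sup>+\<omega>. indicator B \<omega> * f (X (Suc n) \<omega>) \<partial>Mw) =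
             (\<integral>\<^sup>+\<omega>. indicator B \<omega> * (\<integral>\<^sup>+y. f y \<partial>P (\<gamma> N \<omega>) (X n \<omega>)) \<partial>Mw)"
proof -
  obtain j where j: "lag_time lags j \<le> n" "n < lag_time lags (Suc j)"
    using lag_block_exists[OF lags_pos] by blast
  define K where "K \<omega> = P (\<gamma> (lag_time lags j) \<omega>) (X n \<omega>)" for \<omega>
  have B_sets[measurable]: "B \<in> sets Mw" using sets_F_subset[OF B] .
  have K_prob: "K \<in> Mw \<rightarrow>\<^sub>M prob_algebra S"
  proof -
    have "(\<lambda>\<omega>. (\<gamma> (lag_time lags j) \<omega>, X n \<omega>)) \<in> Mw \<rightarrow>\<^sub>M G \<Otimes>\<^sub>M S" by measurable
    from measurable_comp[OF this kernel] show ?thesis unfolding K_def comp_def by simp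
  qed
  have K[measurable]: "K \<in> Mw \<rightarrow>\<^sub>M subprob_algebra S" using measurable_prob_algebraD[OF K_prob] .
  have K_space: "prob_space (K \<omega>)" "sets (K \<omega>) = sets S" if "\<omega> \<in> space Mw" for \<omega>
    using measurable_space[OF K_prob that] by (auto simp: space_prob_algebra)
  define D where "D = density Mw (indicator B)"
  have sets_D: "sets D = sets Mw" unfolding D_def by simp
  have K_D: "K \<in> D \<rightarrow>\<^sub>M subprob_algebra S" using K by (simp add: measurable_cong_sets[OF sets_D refl])
  have X_D: "X (Suc n) \<in> D \<rightarrow>\<^sub>M S" by (simp add: measurable_cong_sets[OF sets_D refl])
  have D_nonempty: "space D \<noteq> {}" unfolding D_def using not_empty by simp
  have distr_eq: "distr D S (X (Suc n)) = D \<bind> K"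
  proof (rule measure_eqI)
    show "sets (distr D S (X (Suc n))) = sets (D \<bind> K)"
      using K_space by (subst sets_bind[OF _ D_nonempty]) (auto simp: sets_D[THEN sets_eq_imp_space_eq])
  next
    fix A assume "A \<in> sets (distr D S (X (Suc n)))"
    then have A[measurable]: "A \<in> sets S" by simp
    have K_A_meas: "(\<lambda>\<omega>. measure (K \<omega>) A) \<in> borel_measurable Mw"
      using measurable_comp[OF K_prob measurable_measure_prob_algebra[OF A]] by (simp add: comp_def)
    have "emeasure (distr D S (X (Suc n))) A = emeasure D (X (Suc n) -` A \<inter> space D)"
      by (rule emeasure_distr[OF X_D A])
    also have "\<dots> = (\<integral>\<^sup>+\<omega>. indicator B \<omega> * indicator (X (Suc n) -` A \<inter> space Mw) \<omega> \<partial>Mw)"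
      unfolding D_def by (subst emeasure_density) (auto simp: sets_D[THEN sets_eq_imp_space_eq])
    also have "\<dots> = (\<integral>\<^sup>+\<omega>. indicator (B \<inter> {\<omega>\<in>space Mw. X (Suc n) \<omega> \<in> A}) \<omega> \<partial>Mw)"
      by (intro nn_integral_cong) (auto simp: indicator_def)
    also have "\<dots> = emeasure Mw (B \<inter> {\<omega>\<in>space Mw. X (Suc n) \<omega> \<in> A})"
      by (rule nn_integral_indicator) measurable
    also have "\<dots> = ennreal (\<integral>\<omega>. indicator B \<omega> * measure (K \<omega>) A \<partial>Mw)"
      using chain j A B unfolding airmcmc_chain_def K_def by (simp add: emeasure_eq_measure)
    also have "\<dots> = (\<integral>\<^sup>+\<omega>. indicator B \<omega> * emeasure (K \<omega>) A \<partial>Mw)"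
    proof (subst nn_integral_eq_integral[symmetric])
      show "integrable Mw (\<lambda>\<omega>. indicator B \<omega> * measure (K \<omega>) A)"
        by (rule integrable_const_bound[where B=1])
           (use K_A_meas K_space(1) in \<open>auto intro!: AE_I2 simp: indicator_def prob_space.prob_le_1\<close>)
      show "(\<integral>\<^sup>+\<omega>. ennreal (indicator B \<omega> * measure (K \<omega>) A) \<partial>Mw)
          = (\<integral>\<^sup>+\<omega>. indicator B \<omega> * emeasure (K \<omega>) A \<partial>Mw)"
        using K_space(1) by (intro nn_integral_cong)
          (auto simp: finite_measure.emeasure_eq_measure[OF prob_space.finite_measure]
                ennreal_mult indicator_def)
    qed auto
    also have "\<dots> = (\<integral>\<^sup>+\<omega>. emeasure (K \<omega>) A \<partial>D)"
      unfolding D_def by (subst nn_integral_density) auto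
    also have "\<dots> = emeasure (D \<bind> K) A"
      by (rule emeasure_bind[OF D_nonempty K_D A, symmetric])
    finally show "emeasure (distr D S (X (Suc n))) A = emeasure (D \<bind> K) A" .
  qed
  have "(\<integral>\<^sup>+\<omega>. indicator B \<omega> * f (X (Suc n) \<omega>) \<partial>Mw) = (\<integral>\<^sup>+y. f y \<partial>distr D S (X (Suc n)))"
    unfolding D_def by (subst nn_integral_distr[OF X_D[unfolded D_def]]) (auto simp: nn_integral_density)
  also have "\<dots> = (\<integral>\<^sup>+\<omega>. \<integral>\<^sup>+y. f y \<partial>K \<omega> \<partial>D)"
    unfolding distr_eq by (rule nn_integral_bind[OF f K_D])
  also have "\<dots> = (\<integral>\<^sup>+\<omega>. indicator B \<omega> * (\<integral>\<^sup>+y. f y \<partial>K \<omega>) \<partial>Mw)"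
    unfolding D_def by (subst nn_integral_density) (auto intro: nn_integral_measurable_subprob_algebra2)
  finally show ?thesis unfolding K_def by blast
qed

lemma nn_integral_indicator_next_le:
  assumes f: "f \<in> borel_measurable S" and B: "B \<in> sets (F n)"
    and step: "\<And>g \<omega>. g \<in> space G \<Longrightarrow> \<omega> \<in> space Mw \<Longrightarrow> \<omega> \<in> B \<Longrightarrow>
                 (\<integral>\<^sup>+y. f y \<partial>P g (X n \<omega>)) \<le> h \<omega>"
  shows "(\<integral>\<^sup>+\<omega>. indicator B \<omega> * f (X (Suc n) \<omega>) \<partial>Mw) \<le> (\<integral>\<^sup>+\<omega>. indicator B \<omega> * h \<omega> \<partial>Mw)"
proof -
  obtain N where "(\<integral>\<^sup>+\<omega>. indicator B \<omega> * f (X (Suc n) \<omega>) \<partial>Mw) =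
      (\<integral>\<^sup>+\<omega>. indicator B \<omega> * (\<integral>\<^sup>+y. f y \<partial>P (\<gamma> N \<omega>) (X n \<omega>)) \<partial>Mw)"
    using nn_integral_indicator_next[OF f B] by blast
  also have "\<dots> \<le> (\<integral>\<^sup>+\<omega>. indicator B \<omega> * h \<omega> \<partial>Mw)"
    using step \<gamma>_in_space by (intro nn_integral_mono) (auto simp: indicator_def)
  finally show ?thesis .
qed

end

locale simultaneous_drift =
  fixes S :: "'x measure" and G :: "'g measure" and P :: "'g \<Rightarrow> 'x \<Rightarrow> 'x measure"
    and V :: "'x \<Rightarrow> real" and C :: "'x set" and c b \<alpha> K :: real
  assumes kernel: "(\<lambda>(g, x). P g x) \<in> G \<Otimes>\<^sub>M S \<rightarrow>\<^sub>M prob_algebra S"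
    and C_subset: "C \<subseteq> space S"
    and V_measurable[measurable]: "V \<in> borel_measurable S" and V_ge_1: "\<forall>x\<in>space S. V x \<ge> 1"
    and c_pos: "c > 0"
    and drift: "\<forall>g\<in>space G. \<forall>x\<in>space S.
        (\<integral>\<^sup>+ y. ennreal (V y) \<partial>P g x) \<le> ennreal (V x - c * V x powr \<alpha> + b * indicator C x)"
    and K_ge_1: "K \<ge> 1" and V_le_K: "\<forall>x\<in>C. V x \<le> K"
begin

lemma P_space:
  assumes "g \<in> space G" "x \<in> space S"
  shows "prob_space (P g x)" "sets (P g x) = sets S" "space (P g x) = space S"
proof -
  have "(g, x) \<in> space (G \<Otimes>\<^sub>M S)" using assms by (simp add: space_pair_measure)
  from measurable_space[OF kernel this]
  show "prob_space (P g x)" "sets (P g x) = sets S" by (auto simp: space_prob_algebra)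
  then show "space (P g x) = space S" using sets_eq_imp_space_eq by blast
qed

lemma V_measurable_P: "g \<in> space G \<Longrightarrow> x \<in> space S \<Longrightarrow> V \<in> borel_measurable (P g x)"
  using measurable_cong_sets[OF P_space(2) refl, of g x borel] V_measurable by blast

lemma drift_outside_C:
  assumes g: "g \<in> space G" and x: "x \<in> space S" "x \<notin> C"
  shows "(\<integral>\<^sup>+ y. ennreal (V y) \<partial>P g x) \<le> ennreal (V x - c * V x powr \<alpha>)"
    and "1 \<le> V x - c * V x powr \<alpha>"
proof -
  show mean: "(\<integral>\<^sup>+ y. ennreal (V y) \<partial>P g x) \<le> ennreal (V x - c * V x powr \<alpha>)"
    using drift g x by fastforce
  interpret prob_space "P g x" using P_space[OF g x(1)] by simp
  have "1 = (\<integral>\<^sup>+ y. 1 \<partial>P g x)" by (simp add: emeasure_space_1)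
  also have "\<dots> \<le> (\<integral>\<^sup>+ y. ennreal (V y) \<partial>P g x)"
    using V_ge_1 P_space(3)[OF g x(1)] by (intro nn_integral_mono) auto
  finally have "1 \<le> ennreal (V x - c * V x powr \<alpha>)" using mean by order
  then show "1 \<le> V x - c * V x powr \<alpha>"
    by (cases "V x - c * V x powr \<alpha> \<ge> 0") (simp_all add: ennreal_neg)
qed

lemma drift_on_C:
  assumes g: "g \<in> space G" and x: "x \<in> C"
  shows "(\<integral>\<^sup>+ y. ennreal (V y) \<partial>P g x) \<le> ennreal (K + \<bar>b\<bar>)"
proof -
  have "(\<integral>\<^sup>+ y. ennreal (V y) \<partial>P g x) \<le> ennreal (V x - c * V x powr \<alpha> + b * indicator C x)"
    using drift g x C_subset by blast
  also have "\<dots> \<le> ennreal (K + \<bar>b\<bar>)"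
  proof (rule ennreal_leI)
    have "0 \<le> c * V x powr \<alpha>" "V x \<le> K" "b * indicator C x = b"
      using c_pos V_le_K x by auto
    then show "V x - c * V x powr \<alpha> + b * indicator C x \<le> K + \<bar>b\<bar>" by linarith
  qed
  finally show ?thesis .
qed

lemma root_shift_V_measurable[measurable]: "(\<lambda>y. root_shift \<beta> s (V y)) \<in> borel_measurable S"
  unfolding root_shift_def by measurable

lemma root_shift_drift_outside_C:
  assumes \<alpha>: "0 < \<alpha>" "\<alpha> < 1" and g: "g \<in> space G" and x: "x \<in> space S" "x \<notin> C" and s: "s \<ge> 0"
  shows "(\<integral>\<^sup>+ y. ennreal (root_shift (1-\<alpha>) (s + (1-\<alpha>)*c) (V y)) \<partial>P g x)
           \<le> ennreal (root_shift (1-\<alpha>) s (V x))"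
proof -
  let ?z = "V x - c * V x powr \<alpha>"
  have z: "1 \<le> ?z" using drift_outside_C(2)[OF g x] .
  have "(\<integral>\<^sup>+ y. ennreal (root_shift (1-\<alpha>) (s + (1-\<alpha>)*c) (V y)) \<partial>P g x)
      \<le> ennreal (root_shift (1-\<alpha>) (s + (1-\<alpha>)*c) ?z)"
    by (rule nn_integral_root_shift_le[OF P_space(1)[OF g x(1)] V_measurable_P[OF g x(1)] _
          drift_outside_C(1)[OF g x]])
       (use V_ge_1 P_space(3)[OF g x(1)] z \<alpha> s c_pos in \<open>auto intro: less_le_trans\<close>)
  also have "\<dots> \<le> ennreal (root_shift (1-\<alpha>) s (V x))"
    using root_shift_drift[of "1-\<alpha>" s c "V x"] \<alpha> s c_pos z V_ge_1 x by (intro ennreal_leI) auto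
  finally show ?thesis .
qed

lemma root_shift_drift_on_C:
  assumes \<alpha>: "0 < \<alpha>" "\<alpha> < 1" and g: "g \<in> space G" and x: "x \<in> C" and s: "s \<ge> 0"
  shows "(\<integral>\<^sup>+ y. ennreal (root_shift (1-\<alpha>) s (V y)) \<partial>P g x)
           \<le> ennreal (root_shift (1-\<alpha>) s (K + \<bar>b\<bar>))"
proof -
  have xS: "x \<in> space S" using x C_subset by auto
  show ?thesis
    by (rule nn_integral_root_shift_le[OF P_space(1)[OF g xS] V_measurable_P[OF g xS] _
          drift_on_C[OF g x]])
       (use V_ge_1 P_space(3)[OF g xS] \<alpha> s K_ge_1 in \<open>auto intro: less_le_trans\<close>)
qed

lemma V_bounded_superlinear:
  assumes \<alpha>: "1 < \<alpha>" and g: "g \<in> space G" and x: "x \<in> space S"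
  shows "V x \<le> max K ((1/c) powr (1/(\<alpha>-1)))"
proof (cases "x \<in> C")
  case True then show ?thesis using V_le_K by auto
next
  case False
  have v: "V x \<ge> 1" using V_ge_1 x by blast
  have "V x powr \<alpha> = V x powr 1 * V x powr (\<alpha> - 1)"
    by (subst powr_add[symmetric]) simp
  also have "V x powr 1 = V x" using v by simp
  finally have "V x powr \<alpha> = V x * V x powr (\<alpha> - 1)" .
  then have "c * V x powr (\<alpha> - 1) * V x < 1 * V x"
    using drift_outside_C(2)[OF g x False] by (simp add: algebra_simps)
  then have "V x powr (\<alpha> - 1) < 1 / c" using v c_pos by (simp add: field_simps)
  then have "(V x powr (\<alpha> - 1)) powr (1/(\<alpha>-1)) < (1/c) powr (1/(\<alpha>-1))"
    using \<alpha> v by (intro powr_less_mono2) auto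
  then show ?thesis using \<alpha> v by (simp add: powr_powr)
qed

end

locale airmcmc_drift =
  simultaneous_drift S G P V C c b \<alpha> K + airmcmc_process S G P lags Mw F X \<gamma> x0 g0
  for S :: "'x measure" and G :: "'g measure" and P V C c b \<alpha> K lags
    and Mw :: "'w measure" and F X \<gamma> x0 g0 +
  assumes C_sets: "C \<in> sets S" and x0_in_space: "x0 \<in> space S"
begin

lemma V_x0_ge_1: "V x0 \<ge> 1"
  using V_ge_1 x0_in_space by blast

lemma V_X_ge_1: "\<omega> \<in> space Mw \<Longrightarrow> V (X n \<omega>) \<ge> 1"
  using V_ge_1 X_in_space by blast

definition last_visit :: "nat \<Rightarrow> nat \<Rightarrow> 'w set" where
  "last_visit k n = {\<omega>\<in>space Mw. X k \<omega> \<in> C \<and> (\<forall>i\<in>{Suc k..n}. X i \<omega> \<notin> C)}"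

definition no_visit :: "nat \<Rightarrow> 'w set" where
  "no_visit n = {\<omega>\<in>space Mw. \<forall>i\<le>n. X i \<omega> \<notin> C}"

lemma pred_X_in_C: "i \<le> j \<Longrightarrow> Measurable.pred (F j) (\<lambda>\<omega>. X i \<omega> \<in> C)"
  using pred_sets2[OF C_sets X_measurable_F] .

lemma last_visit_sets: "k \<le> n \<Longrightarrow> last_visit k n \<in> sets (F n)"
proof -
  assume "k \<le> n"
  then have "Measurable.pred (F n) (\<lambda>\<omega>. X k \<omega> \<in> C \<and> (\<forall>i\<in>{Suc k..n}. X i \<omega> \<notin> C))"
    by (intro pred_intros_logic(3) pred_intros_finite(3) pred_intros_logic(2) pred_X_in_C) auto
  then show ?thesis unfolding last_visit_def Measurable.pred_def space_F .
qed

lemma no_visit_sets: "no_visit n \<in> sets (F n)"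
proof -
  have "Measurable.pred (F n) (\<lambda>\<omega>. \<forall>i\<in>{..n}. X i \<omega> \<notin> C)"
    by (intro pred_intros_finite(3) pred_intros_logic(2) pred_X_in_C) auto
  then show ?thesis unfolding no_visit_def Measurable.pred_def space_F Ball_def atMost_iff .
qed

lemma large_V_subset_visits:
  assumes t: "t \<ge> K"
  shows "{\<omega>\<in>space Mw. V (X n \<omega>) > t} \<subseteq> no_visit n \<union> (\<Union>k<n. last_visit k n)"
proof
  fix \<omega> assume "\<omega> \<in> {\<omega>\<in>space Mw. V (X n \<omega>) > t}"
  then have \<omega>: "\<omega> \<in> space Mw" and "V (X n \<omega>) > t" by auto
  then have not_C: "X n \<omega> \<notin> C" using V_le_K t by force
  show "\<omega> \<in> no_visit n \<union> (\<Union>k<n. last_visit k n)"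
  proof (cases "\<forall>i\<le>n. X i \<omega> \<notin> C")
    case True then show ?thesis using \<omega> by (auto simp: no_visit_def)
  next
    case False
    define I where "I = {i. i \<le> n \<and> X i \<omega> \<in> C}"
    have I: "finite I" "I \<noteq> {}" using False unfolding I_def by auto
    define k where "k = Max I"
    have "k \<in> I" unfolding k_def using Max_in[OF I] .
    moreover have "\<forall>i\<in>{Suc k..n}. X i \<omega> \<notin> C"
      using Max_ge[OF I(1)] unfolding k_def I_def by fastforce
    ultimately have k: "k \<le> n" "X k \<omega> \<in> C" "\<forall>i\<in>{Suc k..n}. X i \<omega> \<notin> C"
      unfolding I_def by auto
    then have "k < n" using not_C by (cases "k = n") auto
    then show ?thesis using \<omega> k unfolding last_visit_def by auto
  qed
qed

end

locale airmcmc_subgeometric = airmcmc_drift +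
  assumes \<alpha>_gt: "2/3 < \<alpha>" and \<alpha>_lt: "\<alpha> < 1"
begin

abbreviation "\<beta> \<equiv> 1 - \<alpha>"
abbreviation "\<kappa> \<equiv> \<beta> * c"
abbreviation "H\<^sub>C \<equiv> root_shift \<beta> \<kappa> (K + \<bar>b\<bar>)"

lemma \<kappa>_pos: "\<kappa> > 0" using \<alpha>_lt c_pos by simp

lemma root_shift_step_outside_C:
  assumes B: "B \<in> sets (F j)" and B': "B' \<subseteq> B" and off: "\<forall>\<omega>\<in>B. X j \<omega> \<notin> C" and s: "s \<ge> 0"
  shows "(\<integral>\<^sup>+\<omega>. indicator B' \<omega> * ennreal (root_shift \<beta> (s + \<kappa>) (V (X (Suc j) \<omega>))) \<partial>Mw)
       \<le> (\<integral>\<^sup>+\<omega>. indicator B \<omega> * ennreal (root_shift \<beta> s (V (X j \<omega>))) \<partial>Mw)"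
proof -
  have "(\<integral>\<^sup>+\<omega>. indicator B' \<omega> * ennreal (root_shift \<beta> (s + \<kappa>) (V (X (Suc j) \<omega>))) \<partial>Mw)
      \<le> (\<integral>\<^sup>+\<omega>. indicator B \<omega> * ennreal (root_shift \<beta> (s + \<kappa>) (V (X (Suc j) \<omega>))) \<partial>Mw)"
    using B' by (intro nn_integral_mono) (auto simp: indicator_def)
  also have "\<dots> \<le> (\<integral>\<^sup>+\<omega>. indicator B \<omega> * ennreal (root_shift \<beta> s (V (X j \<omega>))) \<partial>Mw)"
  proof (rule nn_integral_indicator_next_le[OF _ B])
    fix g \<omega> assume "g \<in> space G" "\<omega> \<in> space Mw" "\<omega> \<in> B"
    then show "(\<integral>\<^sup>+y. ennreal (root_shift \<beta> (s + \<kappa>) (V y)) \<partial>P g (X j \<omega>))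
        \<le> ennreal (root_shift \<beta> s (V (X j \<omega>)))"
      using root_shift_drift_outside_C[of g "X j \<omega>" s] \<alpha>_gt \<alpha>_lt X_in_space off s by auto
  qed measurable
  finally show ?thesis .
qed

lemma nn_integral_after_last_visit:
  "(\<integral>\<^sup>+\<omega>. indicator (last_visit k (Suc k + d)) \<omega> *
       ennreal (root_shift \<beta> (\<kappa> * real (Suc d)) (V (X (Suc k + d) \<omega>))) \<partial>Mw) \<le> ennreal H\<^sub>C"
proof (induction d)
  case 0
  let ?visit = "{\<omega>\<in>space Mw. X k \<omega> \<in> C}"
  have visit_sets: "?visit \<in> sets (F k)"
    using pred_X_in_C[of k k] unfolding Measurable.pred_def space_F by simp
  have "(\<integral>\<^sup>+\<omega>. indicator (last_visit k (Suc k)) \<omega> * ennreal (root_shift \<beta> \<kappa> (V (X (Suc k) \<omega>))) \<partial>Mw)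
      \<le> (\<integral>\<^sup>+\<omega>. indicator ?visit \<omega> * ennreal (root_shift \<beta> \<kappa> (V (X (Suc k) \<omega>))) \<partial>Mw)"
    by (intro nn_integral_mono) (auto simp: indicator_def last_visit_def)
  also have "\<dots> \<le> (\<integral>\<^sup>+\<omega>. indicator ?visit \<omega> * ennreal H\<^sub>C \<partial>Mw)"
  proof (rule nn_integral_indicator_next_le[OF _ visit_sets])
    fix g \<omega> assume "g \<in> space G" "\<omega> \<in> space Mw" "\<omega> \<in> ?visit"
    then show "(\<integral>\<^sup>+y. ennreal (root_shift \<beta> \<kappa> (V y)) \<partial>P g (X k \<omega>)) \<le> ennreal H\<^sub>C"
      using root_shift_drift_on_C[of g "X k \<omega>" \<kappa>] \<alpha>_gt \<alpha>_lt \<kappa>_pos by auto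
  qed measurable
  also have "\<dots> \<le> (\<integral>\<^sup>+\<omega>. ennreal H\<^sub>C \<partial>Mw)"
    by (intro nn_integral_mono) (auto simp: indicator_def)
  finally show ?case by (simp add: emeasure_space_1)
next
  case (Suc d)
  have shift: "\<kappa> * real (Suc (Suc d)) = \<kappa> * real (Suc d) + \<kappa>" by (simp add: algebra_simps)
  have "(\<integral>\<^sup>+\<omega>. indicator (last_visit k (Suc (Suc k + d))) \<omega> *
        ennreal (root_shift \<beta> (\<kappa> * real (Suc (Suc d))) (V (X (Suc (Suc k + d)) \<omega>))) \<partial>Mw)
      \<le> (\<integral>\<^sup>+\<omega>. indicator (last_visit k (Suc k + d)) \<omega> *
        ennreal (root_shift \<beta> (\<kappa> * real (Suc d)) (V (X (Suc k + d) \<omega>))) \<partial>Mw)"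
    unfolding shift
  proof (rule root_shift_step_outside_C[OF last_visit_sets])
    show "0 \<le> \<kappa> * real (Suc d)" using \<kappa>_pos by simp
  qed (auto simp: last_visit_def)
  then show ?case using Suc.IH unfolding add_Suc_right by (rule order_trans)
qed

lemma nn_integral_no_visit:
  "(\<integral>\<^sup>+\<omega>. indicator (no_visit n) \<omega> * ennreal (root_shift \<beta> (\<kappa> * real n) (V (X n \<omega>))) \<partial>Mw)
     \<le> ennreal (V x0)"
proof (induction n)
  case 0
  have "(\<integral>\<^sup>+\<omega>. indicator (no_visit 0) \<omega> * ennreal (root_shift \<beta> (\<kappa> * real 0) (V (X 0 \<omega>))) \<partial>Mw)
      \<le> (\<integral>\<^sup>+\<omega>. ennreal (V x0) \<partial>Mw)"
    using root_shift_zero[of \<beta> "V x0"] \<alpha>_lt V_x0_ge_1 X_0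
    by (intro nn_integral_mono) (auto simp: indicator_def)
  then show ?case by (simp add: emeasure_space_1)
next
  case (Suc n)
  have shift: "\<kappa> * real (Suc n) = \<kappa> * real n + \<kappa>" by (simp add: algebra_simps)
  have "(\<integral>\<^sup>+\<omega>. indicator (no_visit (Suc n)) \<omega> *
        ennreal (root_shift \<beta> (\<kappa> * real (Suc n)) (V (X (Suc n) \<omega>))) \<partial>Mw)
      \<le> (\<integral>\<^sup>+\<omega>. indicator (no_visit n) \<omega> * ennreal (root_shift \<beta> (\<kappa> * real n) (V (X n \<omega>))) \<partial>Mw)"
    unfolding shift
  proof (rule root_shift_step_outside_C[OF no_visit_sets])
    show "0 \<le> \<kappa> * real n" using \<kappa>_pos by simp
  qed (auto simp: no_visit_def)
  then show ?case using Suc.IH by (rule order_trans)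
qed

lemma measure_V_gt:
  assumes t: "t \<ge> 1" "t \<ge> K"
  shows "measure Mw {\<omega>\<in>space Mw. V (X n \<omega>) > t}
           \<le> V x0 / t + 2 * H\<^sub>C / (t powr (2*\<alpha>-1) * \<kappa>\<^sup>2)"
proof -
  define T where "T = {\<omega>\<in>space Mw. V (X n \<omega>) > t}"
  have T: "T \<in> sets Mw" unfolding T_def by measurable
  have last_visit_M: "last_visit k n \<in> sets Mw" if "k < n" for k
    using sets_F_subset[OF last_visit_sets[of k n]] that by simp
  have no_visit_M: "no_visit n \<in> sets Mw" using sets_F_subset[OF no_visit_sets] .
  have \<beta>: "0 < \<beta>" "\<beta> \<le> 1/2" using \<alpha>_gt \<alpha>_lt by auto
  have exponent: "1 - 2 * (1 - \<alpha>) = 2*\<alpha> - 1" by simp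
  have "T \<subseteq> (no_visit n \<inter> T) \<union> (\<Union>k<n. last_visit k n \<inter> T)"
    using large_V_subset_visits[OF t(2), of n] unfolding T_def by blast
  then have "measure Mw T \<le> measure Mw (no_visit n \<inter> T) + measure Mw (\<Union>k<n. last_visit k n \<inter> T)"
    using no_visit_M last_visit_M T
    by (intro order_trans[OF finite_measure_mono measure_Un_le]) auto
  also have "measure Mw (\<Union>k<n. last_visit k n \<inter> T) \<le> (\<Sum>k<n. measure Mw (last_visit k n \<inter> T))"
    using last_visit_M T by (intro finite_measure_subadditive_finite) auto
  also have "measure Mw (no_visit n \<inter> T) \<le> V x0 / t"
    by (rule measure_le_nn_integral_divide[OF no_visit_M T _ _ _ nn_integral_no_visit])
       (use root_shift_ge[OF \<beta>(1)] \<kappa>_pos t V_x0_ge_1 in \<open>auto simp: T_def\<close>)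
  also have "(\<Sum>k<n. measure Mw (last_visit k n \<inter> T))
      \<le> (\<Sum>k<n. H\<^sub>C / (t powr (2*\<alpha>-1) * \<kappa>\<^sup>2) * (1 / (real (n - k))\<^sup>2))"
  proof (intro sum_mono)
    fix k assume k: "k \<in> {..<n}"
    have "n = Suc k + (n - Suc k)" "Suc (n - Suc k) = n - k" using k by auto
    then have "(\<integral>\<^sup>+\<omega>. indicator (last_visit k n) \<omega> *
        ennreal (root_shift \<beta> (\<kappa> * real (n - k)) (V (X n \<omega>))) \<partial>Mw) \<le> ennreal H\<^sub>C"
      using nn_integral_after_last_visit[of k "n - Suc k"] by simp
    moreover have "0 < t powr (2*\<alpha>-1) * (\<kappa> * real (n - k))\<^sup>2"
      using t \<kappa>_pos k by (intro mult_pos_pos) (auto simp del: of_nat_diff)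
    ultimately have "measure Mw (last_visit k n \<inter> T) \<le> H\<^sub>C / (t powr (2*\<alpha>-1) * (\<kappa> * real (n - k))\<^sup>2)"
      using k by (intro measure_le_nn_integral_divide[OF last_visit_M T])
         (use k t \<kappa>_pos root_shift_ge_square[OF \<beta>] in \<open>auto simp: T_def exponent\<close>)
    then show "measure Mw (last_visit k n \<inter> T) \<le> H\<^sub>C / (t powr (2*\<alpha>-1) * \<kappa>\<^sup>2) * (1 / (real (n - k))\<^sup>2)"
      by (simp add: power_mult_distrib)
  qed
  also have "\<dots> \<le> H\<^sub>C / (t powr (2*\<alpha>-1) * \<kappa>\<^sup>2) * 2"
    unfolding sum_distrib_left[symmetric] using sum_inverse_squares_le_2[of n]
    by (intro mult_left_mono) auto
  finally show ?thesis unfolding T_def by (simp add: mult.commute)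
qed

lemma tail_bound_subgeometric:
  assumes m: "m \<ge> K + 1"
  shows "measure Mw {\<omega>\<in>space Mw. V (X n \<omega>) powr (2 * \<alpha> - 1) > m}
           \<le> (1 + 2 * H\<^sub>C / \<kappa>\<^sup>2) * V x0 / m"
proof -
  define e where "e = 2 * \<alpha> - 1"
  have e: "0 < e" "e < 1" unfolding e_def using \<alpha>_gt \<alpha>_lt by auto
  have m1: "m \<ge> 1" using m K_ge_1 by simp
  define t where "t = m powr (1 / e)"
  have "m powr 1 \<le> m powr (1 / e)" using e m1 by (intro powr_mono) auto
  then have t: "m \<le> t" unfolding t_def using m1 by simp
  have t_e: "t powr e = m" unfolding t_def using e m1 by (simp add: powr_powr)
  have event_eq: "{\<omega>\<in>space Mw. V (X n \<omega>) powr e > m} = {\<omega>\<in>space Mw. V (X n \<omega>) > t}"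
  proof (intro Collect_cong conj_cong refl)
    fix \<omega> assume "\<omega> \<in> space Mw"
    then have v: "V (X n \<omega>) \<ge> 1" by (rule V_X_ge_1)
    show "(V (X n \<omega>) powr e > m) = (V (X n \<omega>) > t)" unfolding t_e[symmetric]
    proof
      assume "t powr e < V (X n \<omega>) powr e"
      then show "t < V (X n \<omega>)"
        using powr_mono2[of e "V (X n \<omega>)" t] v e by (meson not_less less_imp_le order_trans zero_le_one)
    qed (use v e t m1 in \<open>auto intro: powr_less_mono2\<close>)
  qed
  have "measure Mw {\<omega>\<in>space Mw. V (X n \<omega>) > t} \<le> V x0 / t + 2 * H\<^sub>C / (t powr e * \<kappa>\<^sup>2)"
    using measure_V_gt[of t n] t m1 m unfolding e_def by simp
  also have "\<dots> \<le> V x0 / m + 2 * H\<^sub>C / \<kappa>\<^sup>2 * V x0 / m"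
  proof (rule add_mono)
    show "V x0 / t \<le> V x0 / m" using V_x0_ge_1 t m1 by (intro divide_left_mono) auto
    have "2 * H\<^sub>C / (t powr e * \<kappa>\<^sup>2) = 2 * H\<^sub>C / \<kappa>\<^sup>2 * 1 / m" using t_e by simp
    also have "\<dots> \<le> 2 * H\<^sub>C / \<kappa>\<^sup>2 * V x0 / m"
      using V_x0_ge_1 m1 by (intro divide_right_mono mult_left_mono) auto
    finally show "2 * H\<^sub>C / (t powr e * \<kappa>\<^sup>2) \<le> 2 * H\<^sub>C / \<kappa>\<^sup>2 * V x0 / m" .
  qed
  also have "V x0 / m + 2 * H\<^sub>C / \<kappa>\<^sup>2 * V x0 / m = (1 + 2 * H\<^sub>C / \<kappa>\<^sup>2) * V x0 / m"
    by (simp add: distrib_right add_divide_distrib)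
  finally show ?thesis unfolding event_eq[unfolded e_def] .
qed

end

context airmcmc_drift
begin

lemma nn_integral_V_geometric:
  assumes \<alpha>: "\<alpha> = 1"
  shows "(\<integral>\<^sup>+\<omega>. ennreal (V (X n \<omega>)) \<partial>Mw) \<le> ennreal (V x0 + \<bar>b\<bar> / min c (1/2))"
proof -
  define \<theta> where "\<theta> = min c (1/2)"
  have \<theta>: "0 < \<theta>" "\<theta> \<le> 1/2" "\<theta> \<le> c" unfolding \<theta>_def using c_pos by auto
  define R where "R = V x0 + \<bar>b\<bar> / \<theta>"
  have step: "(\<integral>\<^sup>+ y. ennreal (V y) \<partial>P g x) \<le> ennreal (1 - \<theta>) * ennreal (V x) + ennreal \<bar>b\<bar>"
    if g: "g \<in> space G" and x: "x \<in> space S" for g x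
  proof -
    have v: "V x \<ge> 1" using V_ge_1 x by blast
    have "(\<integral>\<^sup>+ y. ennreal (V y) \<partial>P g x) \<le> ennreal (V x - c * V x powr \<alpha> + b * indicator C x)"
      using drift g x by blast
    also have "\<dots> \<le> ennreal ((1 - \<theta>) * V x + \<bar>b\<bar>)"
    proof (rule ennreal_leI)
      have "V x powr \<alpha> = V x" "\<theta> * V x \<le> c * V x" "b * indicator C x \<le> \<bar>b\<bar>"
        using \<alpha> v \<theta> by (auto simp: indicator_def intro: mult_right_mono)
      then show "V x - c * V x powr \<alpha> + b * indicator C x \<le> (1 - \<theta>) * V x + \<bar>b\<bar>"
        by (simp add: algebra_simps)
    qed
    also have "\<dots> = ennreal (1 - \<theta>) * ennreal (V x) + ennreal \<bar>b\<bar>"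
      using \<theta> v by (simp add: ennreal_plus ennreal_mult)
    finally show ?thesis .
  qed
  show ?thesis unfolding \<theta>_def[symmetric] R_def[symmetric]
  proof (induction n)
    case 0
    have "(\<integral>\<^sup>+\<omega>. ennreal (V (X 0 \<omega>)) \<partial>Mw) = (\<integral>\<^sup>+\<omega>. ennreal (V x0) \<partial>Mw)"
      by (intro nn_integral_cong) (simp add: X_0)
    also have "\<dots> = ennreal (V x0)" by (simp add: emeasure_space_1)
    also have "\<dots> \<le> ennreal R" unfolding R_def using \<theta> by (intro ennreal_leI) auto
    finally show ?case .
  next
    case (Suc n)
    have "(\<integral>\<^sup>+\<omega>. ennreal (V (X (Suc n) \<omega>)) \<partial>Mw)
        = (\<integral>\<^sup>+\<omega>. indicator (space Mw) \<omega> * ennreal (V (X (Suc n) \<omega>)) \<partial>Mw)"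
      by (intro nn_integral_cong) simp
    also have "\<dots> \<le> (\<integral>\<^sup>+\<omega>. indicator (space Mw) \<omega> *
        (ennreal (1 - \<theta>) * ennreal (V (X n \<omega>)) + ennreal \<bar>b\<bar>) \<partial>Mw)"
      by (rule nn_integral_indicator_next_le)
         (use step X_in_space sets.top[of "F n"] space_F in auto)
    also have "\<dots> = (\<integral>\<^sup>+\<omega>. ennreal (1 - \<theta>) * ennreal (V (X n \<omega>)) + ennreal \<bar>b\<bar> \<partial>Mw)"
      by (intro nn_integral_cong) simp
    also have "\<dots> = ennreal (1 - \<theta>) * (\<integral>\<^sup>+\<omega>. ennreal (V (X n \<omega>)) \<partial>Mw) + ennreal \<bar>b\<bar>"
      by (simp add: nn_integral_add nn_integral_cmult emeasure_space_1)
    also have "\<dots> \<le> ennreal (1 - \<theta>) * ennreal R + ennreal \<bar>b\<bar>"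
      using Suc.IH by (intro add_mono mult_left_mono) auto
    also have "\<dots> = ennreal ((1 - \<theta>) * R + \<bar>b\<bar>)"
      using \<theta> V_x0_ge_1 unfolding R_def by (simp add: ennreal_plus ennreal_mult)
    also have "\<dots> \<le> ennreal R"
      using \<theta> V_x0_ge_1 unfolding R_def by (intro ennreal_leI) (simp add: field_simps)
    finally show ?case .
  qed
qed

lemma tail_bound_geometric:
  assumes \<alpha>: "\<alpha> = 1" and m: "m > 0"
  shows "measure Mw {\<omega>\<in>space Mw. V (X n \<omega>) powr (2 * \<alpha> - 1) > m}
           \<le> (1 + \<bar>b\<bar> / min c (1/2)) * V x0 / m"
proof -
  have "{\<omega>\<in>space Mw. V (X n \<omega>) powr (2 * \<alpha> - 1) > m} = space Mw \<inter> {\<omega>\<in>space Mw. V (X n \<omega>) > m}"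
  proof -
    have "V (X n \<omega>) powr (2 * \<alpha> - 1) = V (X n \<omega>)" if "\<omega> \<in> space Mw" for \<omega>
    proof -
      have "0 \<le> V (X n \<omega>)" using V_X_ge_1[OF that, of n] by linarith
      then show ?thesis using \<alpha> by simp
    qed
    then show ?thesis by auto
  qed
  also have "measure Mw \<dots> \<le> (V x0 + \<bar>b\<bar> / min c (1/2)) / m"
  proof (rule measure_le_nn_integral_divide[OF sets.top _ m, where h="\<lambda>\<omega>. V (X n \<omega>)"])
    show "{\<omega>\<in>space Mw. V (X n \<omega>) > m} \<in> sets Mw" by measurable
    have "(\<integral>\<^sup>+\<omega>. indicator (space Mw) \<omega> * ennreal (V (X n \<omega>)) \<partial>Mw)
        = (\<integral>\<^sup>+\<omega>. ennreal (V (X n \<omega>)) \<partial>Mw)"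
      by (intro nn_integral_cong) simp
    then show "(\<integral>\<^sup>+\<omega>. indicator (space Mw) \<omega> * ennreal (V (X n \<omega>)) \<partial>Mw)
        \<le> ennreal (V x0 + \<bar>b\<bar> / min c (1/2))"
      using nn_integral_V_geometric[OF \<alpha>, of n] by simp
  qed (use c_pos V_x0_ge_1 in auto)
  also have "\<dots> \<le> (1 + \<bar>b\<bar> / min c (1/2)) * V x0 / m"
    using c_pos V_x0_ge_1 m mult_left_mono[OF V_x0_ge_1, of "\<bar>b\<bar> / min c (1/2)"]
    by (intro divide_right_mono) (auto simp: algebra_simps)
  finally show ?thesis .
qed

lemma tail_vanishes_superlinear:
  assumes \<alpha>: "1 < \<alpha>" and m: "m \<ge> (max K ((1/c) powr (1/(\<alpha>-1)))) powr (2*\<alpha>-1)"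
  shows "measure Mw {\<omega>\<in>space Mw. V (X n \<omega>) powr (2 * \<alpha> - 1) > m} = 0"
proof -
  have "V (X n \<omega>) powr (2 * \<alpha> - 1) \<le> m" if "\<omega> \<in> space Mw" for \<omega>
  proof -
    have "V (X n \<omega>) powr (2 * \<alpha> - 1) \<le> (max K ((1/c) powr (1/(\<alpha>-1)))) powr (2*\<alpha>-1)"
      using V_bounded_superlinear[OF \<alpha> \<gamma>_in_space[OF that] X_in_space[OF that]]
        V_X_ge_1[OF that] \<alpha> by (intro powr_mono2) (auto intro: order_trans[OF zero_le_one])
    then show ?thesis using m by linarith
  qed
  then have empty: "{\<omega>\<in>space Mw. V (X n \<omega>) powr (2 * \<alpha> - 1) > m} = {}"
    by fastforce
  show ?thesis unfolding empty by simp
qed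

end

context simultaneous_drift
begin

definition tail_constant :: real where
  "tail_constant =
     (if \<alpha> < 1 then max (K + 1) (1 + 2 * root_shift (1 - \<alpha>) ((1 - \<alpha>) * c) (K + \<bar>b\<bar>) / ((1 - \<alpha>) * c)\<^sup>2)
      else if \<alpha> = 1 then max 2 (1 + \<bar>b\<bar> / min c (1/2))
      else max 2 ((max K ((1/c) powr (1/(\<alpha>-1)))) powr (2*\<alpha>-1)))"

lemma tail_constant_ge_2: "tail_constant \<ge> 2"
  using K_ge_1 unfolding tail_constant_def by auto

end

lemma (in airmcmc_drift) tail_bound:
  assumes \<alpha>: "2/3 < \<alpha>" and m: "m \<ge> tail_constant"
  shows "measure Mw {\<omega>\<in>space Mw. V (X n \<omega>) powr (2 * \<alpha> - 1) > m}
           \<le> tail_constant * V x0 * ln (1 + m) / m"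
proof -
  have m2: "m \<ge> 2" using m tail_constant_ge_2 by linarith
  consider "\<alpha> < 1" | "\<alpha> = 1" | "1 < \<alpha>" by linarith
  then show ?thesis
  proof cases
    case 1
    interpret airmcmc_subgeometric S G P V C c b \<alpha> K lags Mw F X \<gamma> x0 g0
      by unfold_locales (use \<alpha> 1 in auto)
    have "tail_constant = max (K + 1) (1 + 2 * H\<^sub>C / \<kappa>\<^sup>2)"
      unfolding tail_constant_def using 1 by simp
    then show ?thesis
      using le_ln_bound[OF tail_bound_subgeometric _ _ _ m2] m V_x0_ge_1 by auto
  next
    case 2
    have "tail_constant = max 2 (1 + \<bar>b\<bar> / min c (1/2))"
      unfolding tail_constant_def using 2 by simp
    then show ?thesis
      using le_ln_bound[OF tail_bound_geometric[OF 2] _ _ _ m2] m m2 V_x0_ge_1 c_pos by auto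
  next
    case 3
    have "tail_constant = max 2 ((max K ((1/c) powr (1/(\<alpha>-1)))) powr (2*\<alpha>-1))"
      unfolding tail_constant_def using 3 by simp
    then have "measure Mw {\<omega>\<in>space Mw. V (X n \<omega>) powr (2 * \<alpha> - 1) > m} \<le> 0 * V x0 / m"
      using tail_vanishes_superlinear[OF 3] m by simp
    then show ?thesis
      by (rule le_ln_bound[OF _ _ _ _ m2]) (use m2 m V_x0_ge_1 tail_constant_ge_2 in auto)
  qed
qed

theorem mainTheorem14:
  fixes S :: "'x measure" and G :: "'g measure"
    and P :: "'g \<Rightarrow> 'x \<Rightarrow> 'x measure"
    and \<pi> :: "'x measure" and C :: "'x set"
    and \<delta> :: real and \<nu> :: "'x measure"
    and V :: "'x \<Rightarrow> real" and c b \<alpha> :: real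
    and lags :: "nat \<Rightarrow> nat"
  assumes kernel: "(\<lambda>(g, x). P g x) \<in> G \<Otimes>\<^sub>M S \<rightarrow>\<^sub>M prob_algebra S"
    and pi_prob: "prob_space \<pi>" and pi_sets: "sets \<pi> = sets S"
    and invariant: "\<forall>g\<in>space G. pi_invariant S \<pi> (P g)"
    and irreducible: "\<forall>g\<in>space G. pi_irreducible S \<pi> (P g)"
    and aperiodic: "\<forall>g\<in>space G. aperiodic_kernel S \<pi> (P g)"
    and C_sets: "C \<in> sets S" and C_pos: "measure \<pi> C > 0"
    and delta_pos: "\<delta> > 0"
    and nu_prob: "prob_space \<nu>" and nu_sets: "sets \<nu> = sets S"
    and minor: "\<forall>g\<in>space G. \<forall>x\<in>C. \<forall>A\<in>sets S. measure (P g x) A \<ge> \<delta> * measure \<nu> A"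
    and V_meas: "V \<in> borel_measurable S" and V_ge1: "\<forall>x\<in>space S. V x \<ge> 1"
    and c_pos: "c > 0"
    and alpha: "\<alpha> > 2/3"
    and drift: "\<forall>g\<in>space G. \<forall>x\<in>space S.
        (\<integral>\<^sup>+ y. ennreal (V y) \<partial>P g x) \<le> ennreal (V x - c * V x powr \<alpha> + b * indicator C x)"
    and V_C_bdd: "bdd_above (V ` C)"
    and lags_pos: "\<forall>k\<ge>1. lags k \<ge> 1"
  shows "\<exists>Mb::real. \<forall>(Mw::'w measure) F X \<gamma> x0 g0.
           x0 \<in> space S \<and> g0 \<in> space G \<and> airmcmc_chain S G P lags Mw F X \<gamma> x0 g0 \<longrightarrow>
           (\<forall>n>0. \<forall>m\<ge>Mb.
              measure Mw {\<omega>\<in>space Mw. V (X n \<omega>) powr (2 * \<alpha> - 1) > m}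
                \<le> Mb * V x0 * ln (1 + m) / m)"
proof -
  define K where "K = max 1 (Sup (V ` C))"
  interpret simultaneous_drift S G P V C c b \<alpha> K
    using kernel sets.sets_into_space[OF C_sets] V_meas V_ge1 c_pos drift
      cSup_upper[OF imageI V_C_bdd]
    by unfold_locales (auto simp: K_def le_max_iff_disj)
  have "measure Mw {\<omega>\<in>space Mw. V (X n \<omega>) powr (2 * \<alpha> - 1) > m}
          \<le> tail_constant * V x0 * ln (1 + m) / m"
    if "x0 \<in> space S" "airmcmc_chain S G P lags Mw F X \<gamma> x0 g0" "m \<ge> tail_constant"
    for Mw :: "'w measure" and F X \<gamma> x0 g0 n m
  proof -
    interpret airmcmc_drift S G P V C c b \<alpha> K lags Mw F X \<gamma> x0 g0
      by (intro airmcmc_drift.intro airmcmc_drift_axioms.intro airmcmc_process.intro)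
         (use that kernel lags_pos C_sets in \<open>auto intro: simultaneous_drift_axioms\<close>)
    show ?thesis using tail_bound[OF alpha that(3)] .
  qed
  then show ?thesis by blast
qed

end
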